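(* Let $p,q$ be positive integers with $q>2p$, let $j\in\{0,\dots,p-1\}$, and let $$\sum_{i=0}^{q-1}\eta_i|i\rangle=\mathrm{FT}_q\left(\sum_{i=0}^{p-1}\frac{1}{\sqrt p}\,\omega_p^{-ij}|i\rangle\right).$$ Then: (1) $|\eta_{j'}|\geq\sqrt{\frac pq}\left(1-20\frac{p^2}{q^2}\right)$; (2) for every $k\in\{0,\dots,p-1\}$ with $k\neq j$, $|\eta_{k'}|\leq\sqrt{\frac pq}\,\frac{2}{|k-j|_p}\,\frac pq$.
   Context: $\omega_N=e^{2\pi i/N}$. For a vector $\sum_{i=0}^{p-1}x_i|i\rangle$, $\mathrm{FT}_q$ maps it to $\sum_{c=0}^{q-1}\left(\frac{1}{\sqrt q}\sum_{i=0}^{p-1}\omega_q^{ic}x_i\right)|c\rangle$. For $i\in\{0,\dots,p-1\}$, $i'=\lfloor\frac qp i\rfloor$. For an integer $x$, $|x|_p=x\bmod p$ if $0\le x\bmod p\le p/2$, and $|x|_p=(-x)\bmod p$ otherwise. *)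

theory Defs
  imports Complex_Main
begin

definition omega :: "nat \<Rightarrow> complex" where
  "omega N = exp (2 * of_real pi * \<i> / of_nat N)"

text \<open>FT_q applied to a vector x supported on basis states 0..p-1; coefficient of |c>.\<close>
definition FT :: "nat \<Rightarrow> nat \<Rightarrow> (nat \<Rightarrow> complex) \<Rightarrow> nat \<Rightarrow> complex" where
  "FT q p x c = (\<Sum>i<p. omega q ^ (i * c) * x i) / of_real (sqrt (real q))"

definition prime_idx :: "nat \<Rightarrow> nat \<Rightarrow> nat \<Rightarrow> nat" where
  "prime_idx q p i = nat \<lfloor>real q / real p * real i\<rfloor>"

definition absmod :: "nat \<Rightarrow> int \<Rightarrow> int" where
  "absmod p x = (if 0 \<le> x mod int p \<and> real_of_int (x mod int p) \<le> real p / 2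
                 then x mod int p else (- x) mod int p)"

end

(*
  Up to the factor sqrt(p/q) / p, the coefficient eta_c is the geometric sum of the phases
  e^(2 pi i theta l), l < p, with theta = c/q - j/p.

  At c = j' we have |theta| <= 1/q, so every phase has real part cos(2 pi l theta) >= 1 - 2 pi^2 p^2/q^2,
  and 2 pi^2 < 20.

  At c = k' we have theta = (n - u)/p with n = k - j and 0 <= u <= p/q <= 1/2, and the geometric sum
  has modulus sin(pi u) / |sin(pi (n - u)/p)|.  Reducing n modulo p bounds the denominator from below
  by sin(pi (m - u)/p) with m = |n|_p <= p/2, and since sin x / x decreases on (0, pi] this is at least
  (2m/p) cos(pi u/2).  Together with sin(pi u) <= 4u cos(pi u/2) the quotient is at most 2up/m <= 2p^2/(qm).
*)
theory Submission
  imports Defs "HOL-Analysis.Complex_Transcendental"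
begin

lemma cos_ge_1_minus_square_half: "1 - x\<^sup>2 / 2 \<le> cos (x::real)"
proof -
  have "(sin (x/2))\<^sup>2 \<le> (x/2)\<^sup>2"
    using abs_sin_x_le_abs_x[of "x/2"] by (metis abs_ge_zero power_mono power2_abs)
  then show ?thesis using cos_double_sin[of "x/2"] by (simp add: power_divide)
qed

lemma x_cos_le_sin:
  assumes "0 \<le> x" "x \<le> pi" shows "x * cos x \<le> sin x"
proof -
  have "sin 0 - 0 * cos 0 \<le> sin x - x * cos x"
  proof (rule DERIV_nonneg_imp_nondecreasing[OF assms(1)])
    fix t assume "0 \<le> t" "t \<le> x"
    then show "\<exists>y. ((\<lambda>t. sin t - t * cos t) has_real_derivative y) (at t) \<and> 0 \<le> y"
      using assms by (auto intro!: exI[of _ "t * sin t"] derivative_eq_intros mult_nonneg_nonneg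
          sin_ge_zero simp: algebra_simps)
  qed
  then show ?thesis by simp
qed

lemma sin_div_antimono:
  assumes "0 < x" "x \<le> y" "y \<le> pi" shows "sin y / y \<le> sin x / x"
proof (rule DERIV_nonpos_imp_nonincreasing[OF assms(2)])
  fix t assume "x \<le> t" "t \<le> y"
  then show "\<exists>d. ((\<lambda>t. sin t / t) has_real_derivative d) (at t) \<and> d \<le> 0"
    using assms x_cos_le_sin[of t]
    by (auto intro!: exI[of _ "(t * cos t - sin t) / t\<^sup>2"] derivative_eq_intros divide_nonpos_nonneg
        simp: power2_eq_square field_simps)
qed

lemma sin_pi_mono_symmetric:
  assumes "0 \<le> a" "a \<le> b" "a + b \<le> 1" shows "sin (pi * a) \<le> sin (pi * b)"
proof (cases "b \<le> 1/2")
  case True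
  then show ?thesis
    using assms by (intro sin_monotone_2pi_le) (auto intro: order_trans[of _ 0] mult_left_mono)
next
  case False
  have "sin (pi * a) \<le> sin (pi * (1 - b))"
    using assms False by (intro sin_monotone_2pi_le) (auto intro: order_trans[of _ 0] mult_left_mono)
  then show ?thesis by (simp add: right_diff_distrib)
qed

lemma abs_sin_add_int_pi: "\<bar>sin (x + of_int k * pi)\<bar> = \<bar>sin x\<bar>"
  by (simp add: sin_add mult.commute[of _ pi] abs_mult)

lemma sin_pi_le_4_cos_pi_half:
  assumes "0 \<le> u" "u \<le> 1" shows "sin (pi * u) \<le> 4 * u * cos (pi * u / 2)"
proof -
  have cos_nonneg: "0 \<le> cos (pi * u / 2)"
    using assms by (intro cos_ge_zero) (auto simp: field_simps intro: order_trans[of _ 0])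
  have "sin (pi * u) = 2 * sin (pi * u / 2) * cos (pi * u / 2)"
    using sin_double[of "pi * u / 2"] by simp
  also have "\<dots> \<le> 2 * (pi * u / 2) * cos (pi * u / 2)"
    using sin_x_le_x[of "pi * u / 2"] assms cos_nonneg by (intro mult_right_mono) auto
  also have "\<dots> \<le> 4 * u * cos (pi * u / 2)"
    using mult_right_mono[OF less_imp_le[OF pi_less_4] assms(1)] cos_nonneg
    by (intro mult_right_mono) auto
  finally show ?thesis .
qed

lemma cos_pi_half_le_sin_shift:
  fixes m p u :: real
  assumes "1 \<le> m" "2 * m \<le> p" "0 \<le> u" "u < 1"
  shows "2 * m * cos (pi * u / 2) \<le> p * sin (pi * ((m - u) / p))"
proof -
  define z where "z = pi * (m - u) / p"
  define z0 where "z0 = pi * (m - u) / (2 * m)"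
  have "0 < z" unfolding z_def using assms by (intro divide_pos_pos) auto
  moreover have "z \<le> z0" unfolding z_def z0_def using assms by (intro divide_left_mono) auto
  moreover have "z0 \<le> pi" unfolding z0_def using assms by (simp add: field_simps)
  ultimately have sinc: "sin z0 / z0 \<le> sin z / z"
    by (rule sin_div_antimono)
  have "cos (pi * u / 2) \<le> cos (pi * u / (2 * m))"
    using assms mult_right_mono[OF assms(1,3)] by (intro cos_monotone_0_pi_le) (auto simp: field_simps)
  also have "\<dots> = sin z0"
    unfolding z0_def using assms by (simp add: sin_cos_eq field_simps)
  finally have "2 * m * cos (pi * u / 2) \<le> 2 * m * sin z0"
    using assms by simp
  also have "\<dots> = pi * (m - u) * (sin z0 / z0)"
    unfolding z0_def using assms by (simp add: field_simps)
  also have "\<dots> \<le> pi * (m - u) * (sin z / z)"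
    using sinc assms by (intro mult_left_mono) auto
  also have "\<dots> = p * sin z"
    unfolding z_def using assms by (simp add: field_simps)
  finally show ?thesis unfolding z_def by simp
qed

lemma norm_cis_double_minus_1: "cmod (cis (2 * a) - 1) = 2 * \<bar>sin a\<bar>"
proof -
  have "cis (2 * a) - 1 = cis a * (2 * \<i> * complex_of_real (sin a))"
    using cos_double_sin[of a] sin_double[of a] by (simp add: complex_eq_iff algebra_simps power2_eq_square)
  then show ?thesis by (simp add: norm_mult)
qed

definition phase_sum :: "nat \<Rightarrow> real \<Rightarrow> complex" where
  "phase_sum p \<theta> = (\<Sum>i<p. cis (2 * pi * \<theta>) ^ i)"

lemma norm_phase_sum:
  assumes "sin (pi * \<theta>) \<noteq> 0"
  shows "cmod (phase_sum p \<theta>) = \<bar>sin (pi * real p * \<theta>)\<bar> / \<bar>sin (pi * \<theta>)\<bar>"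
proof -
  have denom: "cmod (cis (2 * pi * \<theta>) - 1) = 2 * \<bar>sin (pi * \<theta>)\<bar>"
    using norm_cis_double_minus_1[of "pi * \<theta>"] by (simp add: mult.assoc)
  then have "cis (2 * pi * \<theta>) \<noteq> 1" using assms by auto
  then have "phase_sum p \<theta> = (cis (2 * pi * \<theta>) ^ p - 1) / (cis (2 * pi * \<theta>) - 1)"
    unfolding phase_sum_def by (rule geometric_sum)
  also have "cis (2 * pi * \<theta>) ^ p = cis (2 * (pi * p * \<theta>))"
    by (simp add: Complex.DeMoivre algebra_simps)
  finally show ?thesis by (simp add: norm_divide denom norm_cis_double_minus_1)
qed

lemma norm_phase_sum_ge:
  "real p * (1 - 2 * pi\<^sup>2 * (real p * \<theta>)\<^sup>2) \<le> cmod (phase_sum p \<theta>)"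
proof -
  have "1 - 2 * pi\<^sup>2 * (p * \<theta>)\<^sup>2 \<le> cos (i * (2 * pi * \<theta>))" if "i < p" for i
  proof -
    have "\<bar>i * \<theta>\<bar> \<le> \<bar>p * \<theta>\<bar>"
      using that by (simp add: abs_mult mult_right_mono)
    then have "(i * \<theta>)\<^sup>2 \<le> (p * \<theta>)\<^sup>2"
      by (metis abs_ge_zero power2_abs power_mono)
    then have "1 - 2 * pi\<^sup>2 * (p * \<theta>)\<^sup>2 \<le> 1 - (i * (2 * pi * \<theta>))\<^sup>2 / 2"
      by (simp add: power_mult_distrib ac_simps)
    then show ?thesis using cos_ge_1_minus_square_half by (rule order_trans)
  qed
  then have "(\<Sum>i<p. 1 - 2 * pi\<^sup>2 * (p * \<theta>)\<^sup>2) \<le> (\<Sum>i<p. cos (i * (2 * pi * \<theta>)))"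
    by (intro sum_mono) auto
  also have "\<dots> = Re (phase_sum p \<theta>)"
    by (simp add: phase_sum_def Complex.DeMoivre)
  also have "\<dots> \<le> cmod (phase_sum p \<theta>)"
    by (rule complex_Re_le_cmod)
  finally show ?thesis by simp
qed

lemma absmod_cases:
  assumes "p > 0"
  obtains k where "x = absmod p x + k * int p" | k where "x = k * int p - absmod p x"
proof (cases "real_of_int (x mod int p) \<le> real p / 2")
  case True
  then have "absmod p x = x mod int p" using assms by (simp add: absmod_def)
  then have "x = absmod p x + x div int p * int p"
    using div_mult_mod_eq[of x "int p"] by linarith
  then show ?thesis by (rule that(1))
next
  case False
  then have "absmod p x = (- x) mod int p" using assms by (simp add: absmod_def)
  then have "x = - ((- x) div int p) * int p - absmod p x"
    using div_mult_mod_eq[of "- x" "int p"] by linarith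
  then show ?thesis by (rule that(2))
qed

lemma absmod_bounds:
  assumes "p > 0" shows "0 \<le> absmod p x" "2 * absmod p x \<le> int p"
proof -
  show "0 \<le> absmod p x" using assms by (simp add: absmod_def)
  show "2 * absmod p x \<le> int p"
  proof (cases "real_of_int (x mod int p) \<le> real p / 2")
    case True
    then show ?thesis using assms by (simp add: absmod_def field_simps flip: of_int_le_iff)
  next
    case False
    then have "x mod int p \<noteq> 0" by auto
    then have "(- x) mod int p = int p - x mod int p" by (simp add: zmod_zminus1_eq_if)
    then show ?thesis using False by (simp add: absmod_def field_simps flip: of_int_le_iff)
  qed
qed

lemma absmod_pos:
  assumes "p > 0" "\<not> int p dvd x" shows "0 < absmod p x"
proof -
  have "absmod p x \<noteq> 0"
    using assms by (cases rule: absmod_cases[OF assms(1), of x]) auto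
  then show ?thesis using absmod_bounds(1)[OF assms(1), of x] by simp
qed

lemma sin_shift_absmod_le:
  fixes n :: int and u :: real
  assumes "p > 0" "\<not> int p dvd n" "0 \<le> u" "u < 1"
  defines "m \<equiv> real_of_int (absmod p n)"
  shows "0 < sin (pi * ((m - u) / real p))"
    and "sin (pi * ((m - u) / real p)) \<le> \<bar>sin (pi * ((real_of_int n - u) / real p))\<bar>"
proof -
  have m: "1 \<le> m" "2 * m \<le> p"
    using absmod_pos[OF assms(1,2)] absmod_bounds(2)[OF assms(1), of n] unfolding m_def by linarith+
  have lo: "0 < (m - u) / p" and hi: "(m - u) / p + (m + u) / p \<le> 1"
    using m assms by (simp_all add: field_simps)
  have "(m - u) / p < 1"
    using lo hi assms by (simp add: field_simps)
  then show pos: "0 < sin (pi * ((m - u) / p))"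
    using lo by (intro sin_gt_zero) (simp_all del: times_divide_eq_right)
  from assms(1) show "sin (pi * ((m - u) / p)) \<le> \<bar>sin (pi * ((n - u) / p))\<bar>"
  proof (cases rule: absmod_cases[of p n])
    case (1 k)
    then have "real_of_int n = real_of_int (absmod p n + k * int p)" by (rule arg_cong)
    then have n_eq: "real_of_int n = m + of_int k * p"
      unfolding m_def by simp
    have "pi * ((n - u) / p) = pi * ((m - u) / p) + of_int k * pi"
      unfolding n_eq using assms by (simp add: field_simps)
    then show ?thesis using pos by (simp only: abs_sin_add_int_pi abs_of_pos order_refl)
  next
    case (2 k)
    then have "real_of_int n = real_of_int (k * int p - absmod p n)" by (rule arg_cong)
    then have n_eq: "real_of_int n = of_int k * p - m"
      unfolding m_def by simp
    have "pi * ((n - u) / p) = - (pi * ((m + u) / p)) + of_int k * pi"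
      unfolding n_eq using assms by (simp add: field_simps)
    moreover have "sin (pi * ((m - u) / p)) \<le> sin (pi * ((m + u) / p))"
      using lo hi assms by (intro sin_pi_mono_symmetric) (auto simp: field_simps)
    ultimately show ?thesis by (simp only: abs_sin_add_int_pi) simp
  qed
qed

lemma norm_phase_sum_off_peak_le:
  fixes n :: int and u :: real
  assumes "p > 0" "\<not> int p dvd n" "0 \<le> u" "u < 1"
  shows "cmod (phase_sum p ((real_of_int n - u) / real p)) \<le> 2 * u * real p / real_of_int (absmod p n)"
proof -
  define m where "m = real_of_int (absmod p n)"
  define s where "s = sin (pi * ((m - u) / p))"
  have m: "1 \<le> m" "2 * m \<le> p"
    using absmod_pos[OF assms(1,2)] absmod_bounds(2)[OF assms(1), of n] unfolding m_def by linarith+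
  have s: "0 < s" "s \<le> \<bar>sin (pi * ((n - u) / p))\<bar>"
    using sin_shift_absmod_le[OF assms] unfolding s_def m_def by auto
  have sin_u: "0 \<le> sin (pi * u)"
    using assms by (intro sin_ge_zero) auto
  have "pi * p * ((n - u) / p) = - (pi * u) + of_int n * pi"
    using assms by (simp add: field_simps)
  then have "\<bar>sin (pi * p * ((n - u) / p))\<bar> = sin (pi * u)"
    using sin_u by (simp only: abs_sin_add_int_pi sin_minus abs_minus_cancel abs_of_nonneg)
  then have "cmod (phase_sum p ((n - u) / p)) = sin (pi * u) / \<bar>sin (pi * ((n - u) / p))\<bar>"
    using s by (subst norm_phase_sum) auto
  also have "\<dots> \<le> sin (pi * u) / s"
    using s sin_u by (intro divide_left_mono) auto
  also have "\<dots> \<le> 2 * u * p / m"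
  proof -
    have "m * sin (pi * u) \<le> m * (4 * u * cos (pi * u / 2))"
      using sin_pi_le_4_cos_pi_half[of u] assms m by (intro mult_left_mono) auto
    also have "\<dots> = 2 * u * (2 * m * cos (pi * u / 2))" by simp
    also have "\<dots> \<le> 2 * u * (p * s)"
      using cos_pi_half_le_sin_shift[OF m assms(3,4)] assms unfolding s_def by (intro mult_left_mono) auto
    finally show ?thesis using s m by (simp add: field_simps)
  qed
  finally show ?thesis unfolding m_def .
qed

lemma omega_eq_cis: "omega N = cis (2 * pi / N)"
  unfolding omega_def cis_conv_exp by (simp add: mult.commute)

lemma norm_FT_phase_vector:
  assumes "p > 0"
  shows "cmod (FT q p (\<lambda>i. omega p powi (- (int i * int j)) / of_real (sqrt (real p))) c)
    = sqrt (real p / real q) * (cmod (phase_sum p (real c / real q - real j / real p)) / real p)"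
proof -
  define \<theta> where "\<theta> = real c / real q - real j / real p"
  define S where "S = phase_sum p \<theta>"
  have "omega q ^ (i * c) * omega p powi (- (int i * int j)) = cis (2 * pi * \<theta>) ^ i" for i
  proof -
    have "omega p powi (- (int i * int j)) = inverse (omega p ^ (i * j))"
      by (simp add: power_int_minus flip: of_nat_mult)
    then have "omega p powi (- (int i * int j)) = cis (- (real (i * j) * (2 * pi / p)))"
      by (simp add: omega_eq_cis Complex.DeMoivre)
    moreover have "omega q ^ (i * c) = cis (real (i * c) * (2 * pi / q))"
      by (simp add: omega_eq_cis Complex.DeMoivre)
    ultimately show ?thesis
      unfolding \<theta>_def by (simp add: cis_mult Complex.DeMoivre algebra_simps diff_divide_distrib)
  qed
  then have "FT q p (\<lambda>i. omega p powi (- (int i * int j)) / of_real (sqrt (real p))) c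
      = S / of_real (sqrt p) / of_real (sqrt q)"
    unfolding FT_def S_def phase_sum_def by (simp add: sum_divide_distrib)
  moreover have "cmod (S / of_real (sqrt p) / of_real (sqrt q)) = sqrt (real p / real q) * (cmod S / real p)"
    using assms by (cases "q = 0") (simp_all add: norm_divide norm_mult real_sqrt_divide field_simps)
  ultimately show ?thesis unfolding S_def \<theta>_def by simp
qed

lemma prime_idx_bounds:
  "real (prime_idx q p k) \<le> real q / real p * real k"
  "real q / real p * real k < real (prime_idx q p k) + 1"
proof -
  have "real (prime_idx q p k) = real_of_int \<lfloor>real q / real p * real k\<rfloor>"
    unfolding prime_idx_def by simp
  then show "real (prime_idx q p k) \<le> real q / real p * real k"
    "real q / real p * real k < real (prime_idx q p k) + 1"
    by linarith+
qed

lemma norm_phase_sum_prime_idx_peak_ge: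
  assumes "q > 0"
  shows "real p * (1 - 20 * real p ^ 2 / real q ^ 2)
    \<le> cmod (phase_sum p (real (prime_idx q p j) / real q - real j / real p))"
proof -
  define \<theta> where "\<theta> = real (prime_idx q p j) / real q - real j / real p"
  have "real q * \<theta> = real (prime_idx q p j) - real q / real p * real j"
    unfolding \<theta>_def using assms by (simp add: field_simps)
  then have "\<bar>real q * \<theta>\<bar> \<le> 1"
    using prime_idx_bounds[of q p j] by linarith
  then have "\<bar>\<theta>\<bar> \<le> 1 / real q"
    using assms by (simp add: abs_mult field_simps)
  then have "\<bar>real p * \<theta>\<bar> \<le> real p / real q"
    using mult_left_mono[of "\<bar>\<theta>\<bar>" "1 / real q" "real p"] by (simp add: abs_mult)
  then have "(real p * \<theta>)\<^sup>2 \<le> (real p / real q)\<^sup>2"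
    by (metis abs_ge_zero power2_abs power_mono)
  moreover have "2 * pi\<^sup>2 \<le> 20"
  proof -
    have "pi * pi \<le> 3.15 * 3.15"
      using pi_approx(2) by (intro mult_mono) auto
    then show ?thesis by (simp add: power2_eq_square)
  qed
  ultimately have "2 * pi\<^sup>2 * (real p * \<theta>)\<^sup>2 \<le> 20 * (real p / real q)\<^sup>2"
    by (intro mult_mono) auto
  then have "real p * (1 - 20 * real p ^ 2 / real q ^ 2) \<le> real p * (1 - 2 * pi\<^sup>2 * (real p * \<theta>)\<^sup>2)"
    by (intro mult_left_mono) (auto simp: power_divide)
  also have "\<dots> \<le> cmod (phase_sum p \<theta>)"
    by (rule norm_phase_sum_ge)
  finally show ?thesis unfolding \<theta>_def .
qed

lemma norm_phase_sum_prime_idx_off_peak_le: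
  assumes "2 * p < q" "j < p" "k < p" "k \<noteq> j"
  shows "cmod (phase_sum p (real (prime_idx q p k) / real q - real j / real p))
    \<le> real p * (2 / real_of_int (absmod p (int k - int j)) * (real p / real q))"
proof -
  define \<delta> where "\<delta> = real q / real p * real k - real (prime_idx q p k)"
  define u where "u = real p / real q * \<delta>"
  have p: "p > 0" "q > 0" using assms by auto
  have "0 \<le> \<delta>" "\<delta> \<le> 1"
    using prime_idx_bounds[of q p k] unfolding \<delta>_def by linarith+
  then have u: "0 \<le> u" "u \<le> real p / real q"
    unfolding u_def by (simp, intro mult_left_le) simp_all
  have "real p / real q < 1" using assms by simp
  then have "u < 1" using u(2) by linarith
  have \<theta>: "real (prime_idx q p k) / real q - real j / real p = (real_of_int (int k - int j) - u) / real p"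
    unfolding u_def \<delta>_def using p by (simp add: field_simps)
  have "\<not> int p dvd int k - int j"
  proof
    assume "int p dvd int k - int j"
    then have "int p dvd \<bar>int k - int j\<bar>" by simp
    then show False using assms zdvd_imp_le[of "int p" "\<bar>int k - int j\<bar>"] by auto
  qed
  from norm_phase_sum_off_peak_le[OF p(1) this u(1) \<open>u < 1\<close>]
  have "cmod (phase_sum p (real (prime_idx q p k) / real q - real j / real p))
      \<le> 2 * u * real p / real_of_int (absmod p (int k - int j))"
    unfolding \<theta> .
  also have "\<dots> \<le> 2 * (real p / real q) * real p / real_of_int (absmod p (int k - int j))"
    using u absmod_bounds(1)[OF p(1)] by (intro divide_right_mono mult_right_mono) auto
  finally show ?thesis by (simp add: ac_simps)
qed

theorem claim1:
  fixes p q j :: nat and \<eta> :: "nat \<Rightarrow> complex"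
  assumes "p > 0" and "q > 0" and "q > 2 * p" and "j < p"
    and "\<eta> = FT q p (\<lambda>i. omega p powi (- (int i * int j)) / of_real (sqrt (real p)))"
  shows "cmod (\<eta> (prime_idx q p j)) \<ge> sqrt (real p / real q) * (1 - 20 * real p ^ 2 / real q ^ 2)
    \<and> (\<forall>k<p. k \<noteq> j \<longrightarrow> cmod (\<eta> (prime_idx q p k))
           \<le> sqrt (real p / real q) * (2 / real_of_int (absmod p (int k - int j))) * (real p / real q))"
proof (intro conjI allI impI)
  have norm_\<eta>: "cmod (\<eta> c)
      = sqrt (real p / real q) * (cmod (phase_sum p (real c / real q - real j / real p)) / real p)" for c
    unfolding assms(5) by (rule norm_FT_phase_vector[OF assms(1)])
  show "cmod (\<eta> (prime_idx q p j)) \<ge> sqrt (real p / real q) * (1 - 20 * real p ^ 2 / real q ^ 2)"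
    unfolding norm_\<eta> using norm_phase_sum_prime_idx_peak_ge[OF assms(2), of p j] assms(1)
    by (intro mult_left_mono) (auto simp: field_simps)
  fix k assume "k < p" "k \<noteq> j"
  then show "cmod (\<eta> (prime_idx q p k))
      \<le> sqrt (real p / real q) * (2 / real_of_int (absmod p (int k - int j))) * (real p / real q)"
    unfolding norm_\<eta> using norm_phase_sum_prime_idx_off_peak_le[of p q j k] assms(1,3,4)
    by (subst mult.assoc, intro mult_left_mono) (auto simp: field_simps)
qed

end
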